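(* The exponential vector space $X:=\mathscr D([0,\infty):\mathbb N)$ has no basis, i.e. $X\smallsetminus X_0$ has no basis.
   Context: An exponential vector space (evs) over a field $K$ is a partially ordered set $(X,\leq)$ with a binary operation $+$ on $X$ and a map $K\times X\to X$, $(\alpha,x)\mapsto \alpha x$, such that: (A1) $(X,+)$ is a commutative semigroup with identity $\theta$; (A2) $x\leq y$ implies $x+z\leq y+z$ and $\alpha x\leq \alpha y$ for all $z\in X$, $\alpha\in K$; (A3) $\alpha(x+y)=\alpha x+\alpha y$, $\alpha(\beta x)=(\alpha\beta)x$, $(\alpha+\beta)x\leq \alpha x+\beta x$, $1x=x$; (A4) $\alpha x=\theta$ iff $\alpha=0$ or $x=\theta$; (A5) $x+(-1)x=\theta$ iff $x\in X_0$, where $X_0:=\{z\in X: y\not\leq z \text{ for all } y\in X\smallsetminus\{z\}\}$ (the set of minimal elements); (A6) for each $x\in X$ there is $p\in X_0$ with $p\leq x$. $\mathscr D([0,\infty):\mathbb N)$ is the set of all sequences $(x_i)_{i\in\mathbb N}$ with $x_i\in[0,\infty)$, over the field $\mathbb C$, with componentwise addition, scalar multiplication $\alpha\cdot(x_i)_i=(|\alpha|x_i)_i$, and the dictionary order: $x\leq y$ iff $x=y$ or $x_i<y_i$ at the least index $i$ with $x_i\neq y_i$; its primitive space is $\{(0,0,\dots)\}$. For $x\in X\smallsetminus X_0$ let $L(x):=\{z\in X: z\geq \alpha x+p \text{ for some } \alpha\in K\smallsetminus\{0\},\ p\in X_0\}$. A subset $B\subseteq X\smallsetminus X_0$ generates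 $X\smallsetminus X_0$ if $X\smallsetminus X_0=\bigcup_{b\in B}L(b)$. Elements $x,y\in X\smallsetminus X_0$ are orderly dependent if $x\in L(y)$ or $y\in L(x)$, and orderly independent otherwise; $B$ is orderly independent if any two distinct members are orderly independent. A basis of $X\smallsetminus X_0$ is an orderly independent generating subset. *)

theory Defs
  imports Complex_Main
begin

definition prim_space :: "'a set \<Rightarrow> ('a \<Rightarrow> 'a \<Rightarrow> bool) \<Rightarrow> 'a set" where
  "prim_space X le = {z \<in> X. \<forall>y \<in> X - {z}. \<not> le y z}"

definition Lset :: "'a set \<Rightarrow> ('a \<Rightarrow> 'a \<Rightarrow> bool) \<Rightarrow> ('a \<Rightarrow> 'a \<Rightarrow> 'a)
    \<Rightarrow> ('k::field \<Rightarrow> 'a \<Rightarrow> 'a) \<Rightarrow> 'a \<Rightarrow> 'a set" where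
  "Lset X le add smult x =
     {z \<in> X. \<exists>\<alpha>. \<alpha> \<noteq> 0 \<and> (\<exists>p \<in> prim_space X le. le (add (smult \<alpha> x) p) z)}"

definition generates :: "'a set \<Rightarrow> ('a \<Rightarrow> 'a \<Rightarrow> bool) \<Rightarrow> ('a \<Rightarrow> 'a \<Rightarrow> 'a)
    \<Rightarrow> ('k::field \<Rightarrow> 'a \<Rightarrow> 'a) \<Rightarrow> 'a set \<Rightarrow> bool" where
  "generates X le add smult B \<longleftrightarrow>
     B \<subseteq> X - prim_space X le \<and>
     X - prim_space X le = (\<Union>b\<in>B. Lset X le add smult b)"

definition orderly_dependent :: "'a set \<Rightarrow> ('a \<Rightarrow> 'a \<Rightarrow> bool) \<Rightarrow> ('a \<Rightarrow> 'a \<Rightarrow> 'a)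
    \<Rightarrow> ('k::field \<Rightarrow> 'a \<Rightarrow> 'a) \<Rightarrow> 'a \<Rightarrow> 'a \<Rightarrow> bool" where
  "orderly_dependent X le add smult x y \<longleftrightarrow>
     x \<in> Lset X le add smult y \<or> y \<in> Lset X le add smult x"

definition orderly_independent_set :: "'a set \<Rightarrow> ('a \<Rightarrow> 'a \<Rightarrow> bool) \<Rightarrow> ('a \<Rightarrow> 'a \<Rightarrow> 'a)
    \<Rightarrow> ('k::field \<Rightarrow> 'a \<Rightarrow> 'a) \<Rightarrow> 'a set \<Rightarrow> bool" where
  "orderly_independent_set X le add smult B \<longleftrightarrow>
     B \<subseteq> X - prim_space X le \<and>
     (\<forall>x\<in>B. \<forall>y\<in>B. x \<noteq> y \<longrightarrow> \<not> orderly_dependent X le add smult x y)"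

definition is_basis :: "'a set \<Rightarrow> ('a \<Rightarrow> 'a \<Rightarrow> bool) \<Rightarrow> ('a \<Rightarrow> 'a \<Rightarrow> 'a)
    \<Rightarrow> ('k::field \<Rightarrow> 'a \<Rightarrow> 'a) \<Rightarrow> 'a set \<Rightarrow> bool" where
  "is_basis X le add smult B \<longleftrightarrow>
     orderly_independent_set X le add smult B \<and> generates X le add smult B"

definition D_carrier :: "(nat \<Rightarrow> real) set" where
  "D_carrier = {x. \<forall>i. 0 \<le> x i}"

definition D_le :: "(nat \<Rightarrow> real) \<Rightarrow> (nat \<Rightarrow> real) \<Rightarrow> bool" where
  "D_le x y \<longleftrightarrow> x = y \<or> (let i = (LEAST i. x i \<noteq> y i) in x i < y i)"

definition D_add :: "(nat \<Rightarrow> real) \<Rightarrow> (nat \<Rightarrow> real) \<Rightarrow> (nat \<Rightarrow> real)" where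
  "D_add x y = (\<lambda>i. x i + y i)"

definition D_smult :: "complex \<Rightarrow> (nat \<Rightarrow> real) \<Rightarrow> (nat \<Rightarrow> real)" where
  "D_smult \<alpha> x = (\<lambda>i. cmod \<alpha> * x i)"

end

theory Submission
  imports Defs
begin

text \<open>For nonzero sequences, x \<in> L(y), i.e. some positive multiple of y lies below x in the
  dictionary order, exactly when the leading nonzero index of x is at most that of y. Hence any
  two nonzero sequences are orderly dependent, a basis would be a single sequence b, and the unit
  sequence supported just after the leading index of b is not in L(b).\<close>

lemma D_le_at_first_difference:
  assumes "\<forall>i<n. u i = v i" and "u n \<noteq> v n"
  shows "D_le u v \<longleftrightarrow> u n < v n"
proof -
  have "(LEAST i. u i \<noteq> v i) = n"
    by (rule Least_equality) (use assms in \<open>auto simp: not_less[symmetric]\<close>)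
  moreover have "u \<noteq> v"
    using assms(2) by auto
  ultimately show ?thesis
    unfolding D_le_def Let_def by simp
qed

definition lead_index :: "(nat \<Rightarrow> real) \<Rightarrow> nat" where
  "lead_index x = (LEAST i. x i \<noteq> 0)"

lemma below_lead_index: "i < lead_index x \<Longrightarrow> x i = 0"
  unfolding lead_index_def using not_less_Least by blast

lemma lead_index_eqI:
  assumes "x n \<noteq> 0" and "\<forall>i<n. x i = 0"
  shows "lead_index x = n"
  unfolding lead_index_def
  by (rule Least_equality) (use assms in \<open>auto simp: not_less[symmetric]\<close>)

lemma lead_index_pos:
  assumes "x \<in> D_carrier" and "x \<noteq> (\<lambda>i. 0)"
  shows "x (lead_index x) > 0"
proof -
  obtain j where "x j \<noteq> 0"
    using assms(2) by auto
  then have "x (lead_index x) \<noteq> 0"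
    unfolding lead_index_def by (rule LeastI)
  moreover have "x (lead_index x) \<ge> 0"
    using assms(1) unfolding D_carrier_def by blast
  ultimately show ?thesis
    by linarith
qed

lemma D_le_by_lead_index:
  assumes "\<forall>i<lead_index x. u i = 0"
    and "u (lead_index x) < x (lead_index x)"
  shows "D_le u x"
  using assms below_lead_index by (subst D_le_at_first_difference[of "lead_index x"]) auto

lemma prim_space_D: "prim_space D_carrier D_le = {\<lambda>i. 0}"
proof -
  have zero: "(\<lambda>i. 0) \<in> D_carrier"
    unfolding D_carrier_def by simp
  have zero_below: "D_le (\<lambda>i. 0) x" and not_below_zero: "\<not> D_le x (\<lambda>i. 0)"
    if "x \<in> D_carrier" "x \<noteq> (\<lambda>i. 0)" for x
    using that lead_index_pos[OF that] below_lead_index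
    by (auto simp: D_le_at_first_difference[of "lead_index x"])
  show ?thesis
    unfolding prim_space_def using zero zero_below not_below_zero by blast
qed

lemma Lset_D_eq:
  "Lset D_carrier D_le D_add D_smult y = {x \<in> D_carrier. \<exists>c>0. D_le (\<lambda>i. c * y i) x}"
proof -
  have "(\<exists>\<alpha>::complex. \<alpha> \<noteq> 0 \<and> D_le (\<lambda>i. cmod \<alpha> * y i) x) \<longleftrightarrow> (\<exists>c>0. D_le (\<lambda>i. c * y i) x)"
    for x
  proof
    assume "\<exists>c>0. D_le (\<lambda>i. c * y i) x"
    then obtain c where "c > 0" "D_le (\<lambda>i. c * y i) x"
      by blast
    then show "\<exists>\<alpha>::complex. \<alpha> \<noteq> 0 \<and> D_le (\<lambda>i. cmod \<alpha> * y i) x"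
      by (intro exI[of _ "complex_of_real c"]) auto
  next
    assume "\<exists>\<alpha>::complex. \<alpha> \<noteq> 0 \<and> D_le (\<lambda>i. cmod \<alpha> * y i) x"
    then obtain \<alpha> :: complex where "\<alpha> \<noteq> 0" "D_le (\<lambda>i. cmod \<alpha> * y i) x"
      by blast
    then show "\<exists>c>0. D_le (\<lambda>i. c * y i) x"
      by (intro exI[of _ "cmod \<alpha>"]) auto
  qed
  then show ?thesis
    unfolding Lset_def prim_space_D D_add_def D_smult_def by simp
qed

lemma Lset_D_iff_lead_index_le:
  assumes x: "x \<in> D_carrier" "x \<noteq> (\<lambda>i. 0)" and y: "y \<in> D_carrier" "y \<noteq> (\<lambda>i. 0)"
  shows "x \<in> Lset D_carrier D_le D_add D_smult y \<longleftrightarrow> lead_index x \<le> lead_index y"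
proof
  assume "lead_index x \<le> lead_index y"
  then have y_below: "\<forall>i<lead_index x. y i = 0"
    using below_lead_index by auto
  define n where "n = lead_index x"
  have xn: "x n > 0" and yn: "y n \<ge> 0"
    using lead_index_pos[OF x] y(1) unfolding n_def D_carrier_def by auto
  define c where "c = (if y n = 0 then 1 else x n / (2 * y n))"
  have "c > 0" and "c * y n < x n"
    using xn yn unfolding c_def by (auto simp: field_simps)
  moreover have "D_le (\<lambda>i. c * y i) x"
    using \<open>c * y n < x n\<close> y_below by (intro D_le_by_lead_index) (auto simp: n_def)
  ultimately show "x \<in> Lset D_carrier D_le D_add D_smult y"
    unfolding Lset_D_eq using x(1) by blast
next
  assume "x \<in> Lset D_carrier D_le D_add D_smult y"
  then obtain c where c: "c > 0" "D_le (\<lambda>i. c * y i) x"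
    unfolding Lset_D_eq by blast
  show "lead_index x \<le> lead_index y"
  proof (rule ccontr)
    assume "\<not> lead_index x \<le> lead_index y"
    then have x_below: "\<forall>i\<le>lead_index y. x i = 0"
      using below_lead_index[of _ x] by simp
    have "c * y (lead_index y) > 0"
      using c(1) lead_index_pos[OF y] by simp
    with x_below have "\<not> D_le (\<lambda>i. c * y i) x"
      using below_lead_index[of _ y]
      by (subst D_le_at_first_difference[of "lead_index y"]) auto
    with c(2) show False
      by contradiction
  qed
qed

lemma D_orderly_dependent:
  assumes "x \<in> D_carrier - prim_space D_carrier D_le" and "y \<in> D_carrier - prim_space D_carrier D_le"
  shows "orderly_dependent D_carrier D_le D_add D_smult x y"
  using assms nat_le_linear[of "lead_index x" "lead_index y"]
  unfolding orderly_dependent_def prim_space_D by (auto simp: Lset_D_iff_lead_index_le)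

lemma orderly_independent_set_eq_singleton:
  assumes "orderly_independent_set X le add smult B" and "b \<in> B"
    and "\<And>x y. x \<in> X - prim_space X le \<Longrightarrow> y \<in> X - prim_space X le
      \<Longrightarrow> orderly_dependent X le add smult x y"
  shows "B = {b}"
  using assms unfolding orderly_independent_set_def by blast

definition D_unit :: "nat \<Rightarrow> nat \<Rightarrow> real" where
  "D_unit m = (\<lambda>i. if i = m then 1 else 0)"

lemma D_unit_nonprimitive: "D_unit m \<in> D_carrier - prim_space D_carrier D_le"
  unfolding prim_space_D by (auto simp: D_unit_def D_carrier_def dest: fun_cong[of _ _ m])

lemma lead_index_D_unit: "lead_index (D_unit m) = m"
  by (rule lead_index_eqI) (auto simp: D_unit_def)

theorem mainTheorem14:
  shows "\<not> (\<exists>B. is_basis D_carrier D_le D_add D_smult B)"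
proof
  assume "\<exists>B. is_basis D_carrier D_le D_add D_smult B"
  then obtain B where indep: "orderly_independent_set D_carrier D_le D_add D_smult B"
    and gen: "generates D_carrier D_le D_add D_smult B"
    unfolding is_basis_def by blast
  have spans: "D_carrier - prim_space D_carrier D_le = (\<Union>b\<in>B. Lset D_carrier D_le D_add D_smult b)"
    using gen unfolding generates_def by blast
  obtain b where "b \<in> B"
    using D_unit_nonprimitive[of 0] spans by blast
  have "B = {b}"
    using indep \<open>b \<in> B\<close> D_orderly_dependent by (rule orderly_independent_set_eq_singleton)
  moreover have b: "b \<in> D_carrier - prim_space D_carrier D_le"
    using \<open>b \<in> B\<close> indep unfolding orderly_independent_set_def by blast
  ultimately have "D_unit (Suc (lead_index b)) \<in> Lset D_carrier D_le D_add D_smult b"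
    using D_unit_nonprimitive spans by blast
  then have "Suc (lead_index b) \<le> lead_index b"
    using b D_unit_nonprimitive
    by (simp add: prim_space_D Lset_D_iff_lead_index_le lead_index_D_unit)
  then show False
    by simp
qed

end
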